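(* Let $(X,G)$ and $(Y,H)$ be free odometers with $G=H=\mathbb Z^d$. Let $\varphi:Y\to X$ be a homeomorphism implementing a continuous orbit equivalence between $(Y,H)$ and $(X,G)$, and let $f:H\times Y\to G$ be the corresponding orbit cocycle. Then there exist finite-index subgroups $G_0\subseteq G$ and $H_0\subseteq H$ with $[G:G_0]=[H:H_0]$, a clopen partition $\{C_0,\dots,C_{q-1}\}$ of $Y$ into $H_0$-invariant sets, and group isomorphisms $\theta_i:H_0\to G_0$, $i=0,\dots,q-1$, such that $f(h,y)=\theta_i(h)$ for every $h\in H_0$, $y\in C_i$ and $i=0,\dots,q-1$.
   Context: $G$-odometer: for a decreasing sequence $G_0\supseteq G_1\supseteq\cdots$ of finite-index subgroups of $G$, the inverse limit $\varprojlim(G/G_n,\pi_n)$ of coset spaces under the natural maps $\pi_n:G/G_n\to G/G_{n-1}$, with $G$ acting by translation coordinatewise. Free: $g\cdot x=x$ implies $g=e$. Continuous orbit equivalence: a homeomorphism $\varphi:Y\to X$ mapping $H$-orbits bijectively onto $G$-orbits, such that locally each group element of one group is conjugated by $\varphi$ to an element of the other on a clopen neighborhood (in both directions). Orbit cocycle: the map $f:H\times Y\to G$ defined by $f(h,y)\cdot\varphi(y)=\varphi(h\cdot y)$ (well defined by freeness). *)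

theory Defs
  imports "HOL-Analysis.Analysis"
begin

text \<open>The group G = H = Z^d is modelled as the additive group int ^ 'd,
  with 'd a finite type of cardinality d.\<close>

definition subgroup_add :: "'a::ab_group_add set \<Rightarrow> bool" where
  "subgroup_add S \<longleftrightarrow> 0 \<in> S \<and> (\<forall>a\<in>S. \<forall>b\<in>S. a + b \<in> S) \<and> (\<forall>a\<in>S. - a \<in> S)"

definition cosets_of :: "'a::ab_group_add set \<Rightarrow> 'a set set" where
  "cosets_of S = {(+) a ` S | a. True}"

definition finite_index :: "'a::ab_group_add set \<Rightarrow> bool" where
  "finite_index S \<longleftrightarrow> subgroup_add S \<and> finite (cosets_of S)"

definition index :: "'a::ab_group_add set \<Rightarrow> nat" where
  "index S = card (cosets_of S)"

definition odometer_seq :: "(nat \<Rightarrow> 'a::ab_group_add set) \<Rightarrow> bool" where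
  "odometer_seq Gs \<longleftrightarrow> (\<forall>n. finite_index (Gs n)) \<and> (\<forall>n. Gs (Suc n) \<subseteq> Gs n)"

text \<open>The inverse limit of the coset spaces G/G_n under the natural maps:
  compatible sequences of cosets (x (n+1) is contained in x n).\<close>
definition odometer_space :: "(nat \<Rightarrow> 'a::ab_group_add set) \<Rightarrow> (nat \<Rightarrow> 'a set) set" where
  "odometer_space Gs = {x. (\<forall>n. x n \<in> cosets_of (Gs n)) \<and> (\<forall>n. x (Suc n) \<subseteq> x n)}"

definition odometer_top :: "(nat \<Rightarrow> 'a::ab_group_add set) \<Rightarrow> (nat \<Rightarrow> 'a set) topology" where
  "odometer_top Gs = subtopology
      (product_topology (\<lambda>n. discrete_topology (cosets_of (Gs n))) UNIV) (odometer_space Gs)"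

definition odo_act :: "'a::ab_group_add \<Rightarrow> (nat \<Rightarrow> 'a set) \<Rightarrow> (nat \<Rightarrow> 'a set)" where
  "odo_act g x = (\<lambda>n. (+) g ` x n)"

definition free_odometer :: "(nat \<Rightarrow> 'a::ab_group_add set) \<Rightarrow> bool" where
  "free_odometer Gs \<longleftrightarrow> odometer_seq Gs \<and>
     (\<forall>g. \<forall>x\<in>odometer_space Gs. odo_act g x = x \<longrightarrow> g = 0)"

definition clopenin :: "'a topology \<Rightarrow> 'a set \<Rightarrow> bool" where
  "clopenin T U \<longleftrightarrow> openin T U \<and> closedin T U"

definition cont_orbit_equiv ::
  "(nat \<Rightarrow> 'b::ab_group_add set) \<Rightarrow> (nat \<Rightarrow> 'a::ab_group_add set)
     \<Rightarrow> ((nat \<Rightarrow> 'b set) \<Rightarrow> (nat \<Rightarrow> 'a set)) \<Rightarrow> bool" where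
  "cont_orbit_equiv Hs Gs \<phi> \<longleftrightarrow>
     homeomorphic_map (odometer_top Hs) (odometer_top Gs) \<phi> \<and>
     (\<forall>y\<in>odometer_space Hs. \<phi> ` {odo_act h y | h. True} = {odo_act g (\<phi> y) | g. True}) \<and>
     (\<forall>h. \<forall>y\<in>odometer_space Hs. \<exists>U g. clopenin (odometer_top Hs) U \<and> y \<in> U \<and>
         (\<forall>y'\<in>U. \<phi> (odo_act h y') = odo_act g (\<phi> y'))) \<and>
     (\<forall>g. \<forall>x\<in>odometer_space Gs. \<exists>V h. clopenin (odometer_top Gs) V \<and> x \<in> V \<and>
         (\<forall>x'\<in>V. inv_into (odometer_space Hs) \<phi> (odo_act g x')
                    = odo_act h (inv_into (odometer_space Hs) \<phi> x')))"

end

theory Submission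
  imports Defs
begin

text \<open>The cocycle identity f(a + b, y) = f(a, b y) + f(b, y) together with commutativity
  gives a symmetry: if f(a, -) is invariant under h, then f(h, -) is invariant under a.
  Each f(a, -) is locally constant, so by compactness f(e, -) depends only on the N-th
  coordinate for one N serving all d unit vectors e; hence every f(a, -) is invariant
  under H0 = H_N, and by the symmetry f(h, -) for h in H0 is invariant under all of H.
  Being locally constant and constant along the dense orbit of the base point, f(h, -) is
  then constant, equal to \<theta>(h) := f(h, base point). So a single clopen piece C_0 = Y
  suffices, and \<theta>, a bijection H \<rightarrow> G by freeness and the orbit equivalence, maps the
  cosets of H0 bijectively onto those of G0 = \<theta>(H0).\<close>

lemma subgroup_add_translate_eq:
  assumes "subgroup_add S" "s \<in> S"
  shows "(+) s ` S = (S::'a::ab_group_add set)"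
proof
  show "(+) s ` S \<subseteq> S"
    using assms unfolding subgroup_add_def by auto
  show "S \<subseteq> (+) s ` S"
  proof
    fix t assume "t \<in> S"
    then have "- s + t \<in> S"
      using assms unfolding subgroup_add_def by blast
    then show "t \<in> (+) s ` S"
      by (force intro: image_eqI[where x = "- s + t"])
  qed
qed

lemma coset_eq_if_mem:
  assumes "subgroup_add S" "t \<in> (+) a ` S"
  shows "(+) t ` S = (+) a ` (S::'a::ab_group_add set)"
proof -
  obtain s where s: "s \<in> S" "t = a + s"
    using assms(2) by blast
  then have "(+) t ` S = (+) a ` ((+) s ` S)"
    by (simp add: image_image add.assoc)
  then show ?thesis
    using subgroup_add_translate_eq[OF assms(1) s(1)] by simp
qed

lemma odo_act_add: "odo_act a (odo_act b x) = odo_act (a + b) x"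
  by (auto simp: odo_act_def image_image add.assoc)

lemma odo_act_zero [simp]: "odo_act 0 x = x"
  by (simp add: odo_act_def)

lemma odo_act_commute: "odo_act a (odo_act b x) = odo_act b (odo_act a x)"
  by (simp add: odo_act_add add.commute)

lemma odometer_space_coset:
  assumes "x \<in> odometer_space Gs"
  obtains c where "x n = (+) c ` Gs n"
  using assms unfolding odometer_space_def cosets_of_def by blast

lemma odometer_space_antimono:
  assumes "x \<in> odometer_space Gs" "i \<le> n"
  shows "x n \<subseteq> x i"
  using assms lift_Suc_antimono_le[of x] unfolding odometer_space_def by blast

lemma odo_act_in_odometer_space:
  assumes "x \<in> odometer_space Gs"
  shows "odo_act g x \<in> odometer_space Gs"
proof -
  have "odo_act g x n \<in> cosets_of (Gs n)" for n
  proof -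
    obtain c where "x n = (+) c ` Gs n"
      using assms by (rule odometer_space_coset)
    then show ?thesis
      unfolding odo_act_def cosets_of_def by (auto simp: image_image simp flip: add.assoc)
  qed
  moreover have "odo_act g x (Suc n) \<subseteq> odo_act g x n" for n
    using assms unfolding odometer_space_def odo_act_def by auto
  ultimately show ?thesis
    unfolding odometer_space_def by auto
qed

lemma base_point_in_odometer_space:
  assumes "odometer_seq Gs"
  shows "Gs \<in> odometer_space Gs"
proof -
  have "Gs n \<in> cosets_of (Gs n)" for n
    unfolding cosets_of_def by (auto intro: exI[where x = 0])
  then show ?thesis
    using assms unfolding odometer_space_def odometer_seq_def by blast
qed

lemma odometer_space_coord_eq:
  assumes "odometer_seq Gs" "x \<in> odometer_space Gs" "x' \<in> odometer_space Gs"
    and "x' n = x n" "i \<le> n"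
  shows "x' i = x i"
proof -
  have subgroup: "subgroup_add (Gs k)" for k
    using assms(1) unfolding odometer_seq_def finite_index_def by blast
  obtain a where a: "x n = (+) a ` Gs n"
    using assms(2) by (rule odometer_space_coset)
  obtain b where b: "x i = (+) b ` Gs i"
    using assms(2) by (rule odometer_space_coset)
  obtain c where c: "x' i = (+) c ` Gs i"
    using assms(3) by (rule odometer_space_coset)
  have "a \<in> x n"
    using a subgroup[of n] unfolding subgroup_add_def by force
  then have "a \<in> x i" "a \<in> x' i"
    using odometer_space_antimono assms by (metis subsetD)+
  then show ?thesis
    using coset_eq_if_mem[OF subgroup] b c by metis
qed

lemma odo_act_coord_eq:
  assumes "odometer_seq Gs" "x \<in> odometer_space Gs" "g \<in> Gs n"
  shows "odo_act g x n = x n"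
proof -
  obtain c where c: "x n = (+) c ` Gs n"
    using assms(2) by (rule odometer_space_coset)
  have "(+) g ` (+) c ` Gs n = (+) c ` (+) g ` Gs n"
    by (simp add: image_image add.left_commute)
  also have "\<dots> = x n"
    using subgroup_add_translate_eq assms(1,3) c
    unfolding odometer_seq_def finite_index_def by metis
  finally show ?thesis
    unfolding odo_act_def c .
qed

lemma odometer_orbit_meets_cylinder:
  assumes "x \<in> odometer_space Gs"
  obtains c where "odo_act c Gs n = x n"
  using odometer_space_coset[OF assms] unfolding odo_act_def by metis

lemma free_odometer_cancel:
  assumes "free_odometer Gs" "x \<in> odometer_space Gs" "odo_act g x = odo_act g' x"
  shows "g = g'"
proof -
  have "odo_act (g - g') x = odo_act (- g') (odo_act g x)"
    by (simp add: odo_act_add)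
  also have "\<dots> = x"
    using assms(3) by (simp add: odo_act_add)
  finally show ?thesis
    using assms(1,2) unfolding free_odometer_def by auto
qed

lemma topspace_odometer_top [simp]: "topspace (odometer_top Gs) = odometer_space Gs"
  unfolding odometer_top_def odometer_space_def by (auto simp: PiE_UNIV_domain)

lemma continuous_map_odometer_coord:
  "continuous_map (odometer_top Gs) (discrete_topology (cosets_of (Gs n))) (\<lambda>x. x n)"
  unfolding odometer_top_def
  by (intro continuous_map_from_subtopology continuous_map_product_projection) simp

lemma openin_odometer_cylinder:
  "openin (odometer_top Gs) {x \<in> odometer_space Gs. x n = c}"
proof -
  have "openin (odometer_top Gs) {x \<in> topspace (odometer_top Gs). x n \<in> {c} \<inter> cosets_of (Gs n)}"
    by (rule openin_continuous_map_preimage[OF continuous_map_odometer_coord]) simp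
  moreover have "x n \<in> cosets_of (Gs n)" if "x \<in> odometer_space Gs" for x
    using that unfolding odometer_space_def by blast
  ultimately show ?thesis
    by (auto elim!: back_subst[where P = "openin _"])
qed

lemma closedin_odometer_space:
  "closedin (product_topology (\<lambda>n. discrete_topology (cosets_of (Gs n))) UNIV) (odometer_space Gs)"
proof -
  let ?A = "\<lambda>n. cosets_of (Gs n)"
  let ?P = "product_topology (\<lambda>n. discrete_topology (?A n)) UNIV"
  define nested where
    "nested k = {x \<in> topspace ?P. (x k, x (Suc k)) \<in> {(c, d) \<in> ?A k \<times> ?A (Suc k). d \<subseteq> c}}" for k
  have "continuous_map ?P (discrete_topology (?A k \<times> ?A (Suc k))) (\<lambda>x. (x k, x (Suc k)))" for k
    unfolding prod_topology_discrete_topology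
    by (intro continuous_map_pairedI continuous_map_product_projection) simp_all
  then have "closedin ?P (nested k)" for k
    unfolding nested_def by (rule closedin_continuous_map_preimage) auto
  moreover have "odometer_space Gs = (\<Inter>k. nested k)"
    unfolding odometer_space_def nested_def by (auto simp: PiE_UNIV_domain)
  ultimately show ?thesis
    by auto
qed

lemma compact_space_odometer_top:
  assumes "odometer_seq Gs"
  shows "compact_space (odometer_top Gs)"
proof -
  have "compact_space (product_topology (\<lambda>n. discrete_topology (cosets_of (Gs n))) UNIV)"
    using assms unfolding compact_space_product_topology compact_space_discrete_topology
      odometer_seq_def finite_index_def by blast
  then show ?thesis
    unfolding odometer_top_def
    by (intro compact_space_subtopology closedin_compact_space closedin_odometer_space)
qed

lemma odometer_open_contains_cylinder:
  assumes "odometer_seq Gs" "openin (odometer_top Gs) U" "y \<in> U"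
  obtains n where "\<forall>y'\<in>odometer_space Gs. y' n = y n \<longrightarrow> y' \<in> U"
proof -
  let ?D = "\<lambda>n. discrete_topology (cosets_of (Gs n))"
  obtain T where T: "openin (product_topology ?D UNIV) T" "U = T \<inter> odometer_space Gs"
    using assms(2) unfolding odometer_top_def openin_subtopology by blast
  then obtain W where W: "finite {i. W i \<noteq> topspace (?D i)}" "y \<in> Pi\<^sub>E UNIV W"
    "Pi\<^sub>E UNIV W \<subseteq> T"
    using assms(3) unfolding openin_product_topology_alt by auto
  define n where "n = Max (insert 0 {i. W i \<noteq> topspace (?D i)})"
  have y: "y \<in> odometer_space Gs"
    using assms(3) T by blast
  have "y' \<in> U" if y': "y' \<in> odometer_space Gs" "y' n = y n" for y'
  proof -
    have "y' i \<in> W i" for i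
    proof (cases "i \<le> n")
      case True
      then show ?thesis
        using odometer_space_coord_eq[OF assms(1) y y'] W(2) by (auto simp: PiE_UNIV_domain)
    next
      case False
      then have "W i = cosets_of (Gs i)"
        using W(1) unfolding n_def by (metis (mono_tags, lifting) Max_ge finite_insert
            insertCI mem_Collect_eq topspace_discrete_topology)
      then show ?thesis
        using y'(1) unfolding odometer_space_def by blast
    qed
    then show ?thesis
      using W(3) T(2) y'(1) by (auto simp: PiE_UNIV_domain)
  qed
  then show ?thesis
    using that by blast
qed

lemma odometer_locally_constant_imp_uniformly:
  assumes "odometer_seq Gs"
    and "\<forall>x\<in>odometer_space Gs. \<exists>n. \<forall>x'\<in>odometer_space Gs. x' n = x n \<longrightarrow> F x' = F x"
  obtains N where
    "\<forall>x\<in>odometer_space Gs. \<forall>x'\<in>odometer_space Gs. x' N = x N \<longrightarrow> F x' = F x"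
proof -
  let ?X = "odometer_space Gs"
  obtain level where level: "\<forall>x\<in>?X. \<forall>x'\<in>?X. x' (level x) = x (level x) \<longrightarrow> F x' = F x"
    using bchoice[OF assms(2)] by blast
  define cyl where "cyl x = {x' \<in> ?X. x' (level x) = x (level x)}" for x
  have "\<forall>U\<in>cyl ` ?X. openin (odometer_top Gs) U" "topspace (odometer_top Gs) \<subseteq> \<Union> (cyl ` ?X)"
    unfolding cyl_def by (auto intro: openin_odometer_cylinder)
  then obtain C where C: "C \<subseteq> ?X" "finite C" "?X \<subseteq> \<Union> (cyl ` C)"
    using compact_space_odometer_top[OF assms(1)] unfolding compact_space_alt
    by (metis finite_subset_image topspace_odometer_top)
  define N where "N = Max (insert 0 (level ` C))"
  have "F x' = F x" if x: "x \<in> ?X" "x' \<in> ?X" "x' N = x N" for x x'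
  proof -
    obtain z where z: "z \<in> C" "x \<in> cyl z"
      using C(3) x(1) by blast
    have "level z \<le> N"
      using z(1) C(2) unfolding N_def by simp
    then have "x' (level z) = x (level z)"
      using odometer_space_coord_eq[OF assms(1) x] by blast
    then show ?thesis
      using level z C(1) x unfolding cyl_def by (metis (mono_tags, lifting) mem_Collect_eq subsetD)
  qed
  then show ?thesis
    using that by blast
qed

lemma odometer_invariant_locally_constant_imp_constant:
  assumes "odometer_seq Gs"
    and "\<forall>x\<in>odometer_space Gs. \<exists>n. \<forall>x'\<in>odometer_space Gs. x' n = x n \<longrightarrow> F x' = F x"
    and "\<forall>g. \<forall>x\<in>odometer_space Gs. F (odo_act g x) = F x"
    and "x \<in> odometer_space Gs"
  shows "F x = F Gs"
proof -
  obtain n where n: "\<forall>x'\<in>odometer_space Gs. x' n = x n \<longrightarrow> F x' = F x"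
    using assms(2,4) by blast
  obtain c where "odo_act c Gs n = x n"
    using assms(4) by (rule odometer_orbit_meets_cylinder)
  then have "F (odo_act c Gs) = F x"
    using n odo_act_in_odometer_space[OF base_point_in_odometer_space[OF assms(1)]] by blast
  then show ?thesis
    using assms(3) base_point_in_odometer_space[OF assms(1)] by metis
qed

lemma subgroup_add_image:
  fixes F :: "'b::ab_group_add \<Rightarrow> 'a::ab_group_add"
  assumes H: "subgroup_add H" and F: "\<And>a h. h \<in> H \<Longrightarrow> F (a + h) = F a + F h"
  shows "subgroup_add (F ` H)"
  unfolding subgroup_add_def
proof (intro conjI ballI)
  have "0 \<in> H"
    using H unfolding subgroup_add_def by blast
  moreover have F0: "F 0 = 0"
    using F[of 0 0] \<open>0 \<in> H\<close> by simp
  ultimately show "0 \<in> F ` H"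
    by (metis image_eqI)
  fix u v assume "u \<in> F ` H" "v \<in> F ` H"
  then obtain a b where ab: "a \<in> H" "b \<in> H" "u = F a" "v = F b"
    by blast
  have "a + b \<in> H" "- a \<in> H"
    using H ab unfolding subgroup_add_def by blast+
  moreover have "F (a + b) = u + v" "F (- a) = - u"
    using F[OF ab(2), of a] F[OF ab(1), of "- a"] F0 ab by (simp_all add: eq_neg_iff_add_eq_0)
  ultimately show "u + v \<in> F ` H" "- u \<in> F ` H"
    by (metis image_eqI)+
qed

lemma index_image:
  fixes F :: "'b::ab_group_add \<Rightarrow> 'a::ab_group_add"
  assumes "bij F" "finite_index H" "\<And>a h. h \<in> H \<Longrightarrow> F (a + h) = F a + F h"
  shows "finite_index (F ` H)" "index (F ` H) = index H"
proof -
  have coset_image: "F ` ((+) a ` H) = (+) (F a) ` (F ` H)" for a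
    using assms(3) by (auto simp: image_image)
  have "bij_betw ((`) F) (cosets_of H) (cosets_of (F ` H))"
  proof (rule bij_betw_imageI)
    show "inj_on ((`) F) (cosets_of H)"
      using bij_is_inj[OF assms(1)] by (simp add: inj_on_def inj_image_eq_iff)
    have "(`) F ` cosets_of H = {(+) (F a) ` (F ` H) | a. True}"
      unfolding cosets_of_def coset_image[symmetric] by blast
    also have "\<dots> = cosets_of (F ` H)"
      unfolding cosets_of_def using bij_is_surj[OF assms(1)] by (metis surj_f_inv_f)
    finally show "(`) F ` cosets_of H = cosets_of (F ` H)" .
  qed
  moreover have "subgroup_add (F ` H)"
    using assms(2,3) subgroup_add_image unfolding finite_index_def by blast
  ultimately show "finite_index (F ` H)" "index (F ` H) = index H"
    using assms(2) unfolding finite_index_def index_def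
    by (simp_all add: bij_betw_finite bij_betw_same_card)
qed

lemma subgroup_add_axis_eq_UNIV:
  fixes S :: "(int ^ 'n) set"
  assumes "subgroup_add S" "\<And>j. axis j 1 \<in> S"
  shows "S = UNIV"
proof -
  have add: "a \<in> S \<Longrightarrow> b \<in> S \<Longrightarrow> a + b \<in> S" and neg: "a \<in> S \<Longrightarrow> - a \<in> S" for a b
    using assms(1) unfolding subgroup_add_def by blast+
  have axis: "axis j k \<in> S" for j k
  proof (induction k rule: int_induct[where k = 0])
    case base
    then show ?case
      using assms(1) unfolding subgroup_add_def by (simp add: axis_def zero_vec_def)
  next
    case (step1 k)
    have "axis j (k + 1) = axis j k + axis j 1"
      by (simp add: axis_def vec_eq_iff)
    then show ?case
      using add step1.IH assms(2) by metis
  next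
    case (step2 k)
    have "axis j (k - 1) = axis j k + - axis j 1"
      by (simp add: axis_def vec_eq_iff)
    then show ?case
      using add neg step2.IH assms(2) by metis
  qed
  have "(\<Sum>j\<in>J. axis j (x $ j)) \<in> S" if "finite J" for J and x :: "int ^ 'n"
    using that
  proof (induction J rule: finite_induct)
    case empty
    then show ?case
      using assms(1) unfolding subgroup_add_def by simp
  qed (simp add: add axis)
  moreover have "x = (\<Sum>j\<in>UNIV. axis j (x $ j))" for x :: "int ^ 'n"
    by (simp add: vec_eq_iff axis_def)
  ultimately show ?thesis
    by (metis UNIV_eq_I finite)
qed

locale odometer_orbit_equivalence =
  fixes Gs :: "nat \<Rightarrow> 'g::ab_group_add set" and Hs :: "nat \<Rightarrow> 'h::ab_group_add set"
    and \<phi> :: "(nat \<Rightarrow> 'h set) \<Rightarrow> (nat \<Rightarrow> 'g set)" and f :: "'h \<Rightarrow> (nat \<Rightarrow> 'h set) \<Rightarrow> 'g"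
  assumes free_X: "free_odometer Gs" and free_Y: "free_odometer Hs"
    and orbit_equiv: "cont_orbit_equiv Hs Gs \<phi>"
    and cocycle: "\<forall>h. \<forall>y\<in>odometer_space Hs. odo_act (f h y) (\<phi> y) = \<phi> (odo_act h y)"
begin

abbreviation "Y \<equiv> odometer_space Hs"

lemma odometer_seq_Y: "odometer_seq Hs"
  using free_Y unfolding free_odometer_def by blast

lemma phi_homeomorphic: "homeomorphic_map (odometer_top Hs) (odometer_top Gs) \<phi>"
  using orbit_equiv unfolding cont_orbit_equiv_def by blast

lemma phi_in_space: "y \<in> Y \<Longrightarrow> \<phi> y \<in> odometer_space Gs"
  using homeomorphic_imp_surjective_map[OF phi_homeomorphic] by auto

lemma cocycle_unique:
  assumes "y \<in> Y" "odo_act g (\<phi> y) = \<phi> (odo_act h y)"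
  shows "f h y = g"
  using free_odometer_cancel[OF free_X phi_in_space] cocycle assms by metis

lemma cocycle_add:
  assumes "y \<in> Y"
  shows "f (a + b) y = f a (odo_act b y) + f b y"
proof (rule cocycle_unique[OF assms])
  have "odo_act (f a (odo_act b y) + f b y) (\<phi> y) = odo_act (f a (odo_act b y)) (\<phi> (odo_act b y))"
    using cocycle assms by (simp flip: odo_act_add)
  also have "\<dots> = \<phi> (odo_act (a + b) y)"
    using cocycle odo_act_in_odometer_space[OF assms] by (simp flip: odo_act_add)
  finally show "odo_act (f a (odo_act b y) + f b y) (\<phi> y) = \<phi> (odo_act (a + b) y)" .
qed

lemma cocycle_zero: "y \<in> Y \<Longrightarrow> f 0 y = 0"
  by (rule cocycle_unique) simp_all

lemma cocycle_swap:
  assumes "y \<in> Y" "f a (odo_act h y) = f a y"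
  shows "f h (odo_act a y) = f h y"
  using cocycle_add[OF assms(1), of h a] cocycle_add[OF assms(1), of a h] assms(2)
  by (simp add: add.commute)

lemma cocycle_invariant_subgroup:
  "subgroup_add {a. \<forall>y\<in>Y. \<forall>h\<in>K. f a (odo_act h y) = f a y}"
  unfolding subgroup_add_def
proof (intro conjI ballI; clarsimp)
  fix y h assume "y \<in> Y"
  then show "f 0 (odo_act h y) = f 0 y"
    by (simp add: cocycle_zero odo_act_in_odometer_space)
next
  fix a b y h
  assume a: "\<forall>y\<in>Y. \<forall>h\<in>K. f a (odo_act h y) = f a y" and b: "\<forall>y\<in>Y. \<forall>h\<in>K. f b (odo_act h y) = f b y"
    and y: "y \<in> Y" and h: "h \<in> K"
  have "f (a + b) (odo_act h y) = f a (odo_act h (odo_act b y)) + f b (odo_act h y)"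
    using y by (simp add: cocycle_add odo_act_in_odometer_space odo_act_commute)
  also have "\<dots> = f (a + b) y"
    using a b y h by (simp add: cocycle_add odo_act_in_odometer_space)
  finally show "f (a + b) (odo_act h y) = f (a + b) y" .
next
  fix a y h
  assume a: "\<forall>y\<in>Y. \<forall>h\<in>K. f a (odo_act h y) = f a y" and y: "y \<in> Y" and h: "h \<in> K"
  have neg: "f (- a) z = - f a (odo_act (- a) z)" if "z \<in> Y" for z
    using cocycle_add[OF that, of a "- a"] cocycle_zero[OF that] by (simp add: eq_neg_iff_add_eq_0 add.commute)
  show "f (- a) (odo_act h y) = f (- a) y"
    using a y h by (simp add: neg odo_act_in_odometer_space odo_act_commute)
qed

lemma cocycle_locally_constant:
  assumes "y \<in> Y"
  shows "\<exists>n. \<forall>y'\<in>Y. y' n = y n \<longrightarrow> f h y' = f h y"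
proof -
  obtain U g where U: "clopenin (odometer_top Hs) U" "y \<in> U"
    and g: "\<forall>y'\<in>U. \<phi> (odo_act h y') = odo_act g (\<phi> y')"
    using orbit_equiv assms unfolding cont_orbit_equiv_def by blast
  have "openin (odometer_top Hs) U"
    using U(1) unfolding clopenin_def by blast
  then obtain n where n: "\<forall>y'\<in>Y. y' n = y n \<longrightarrow> y' \<in> U"
    using odometer_open_contains_cylinder[OF odometer_seq_Y _ U(2)] by metis
  have "f h y' = g" if "y' \<in> Y" "y' \<in> U" for y'
    using cocycle_unique[OF that(1)] g that(2) by metis
  then show ?thesis
    using n assms U(2) by metis
qed

lemma cocycle_orbit_bij:
  assumes "y \<in> Y"
  shows "bij (\<lambda>a. f a y)"
proof (rule bijI)
  show "inj (\<lambda>a. f a y)"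
  proof (rule injI)
    fix a b assume "f a y = f b y"
    then have "\<phi> (odo_act a y) = \<phi> (odo_act b y)"
      using cocycle assms by metis
    then have "odo_act a y = odo_act b y"
      using homeomorphic_imp_injective_map[OF phi_homeomorphic] assms
      by (simp add: inj_on_eq_iff odo_act_in_odometer_space)
    then show "a = b"
      using free_odometer_cancel[OF free_Y assms] by blast
  qed
  show "surj (\<lambda>a. f a y)"
  proof (rule surjI)
    fix g
    have "odo_act g (\<phi> y) \<in> \<phi> ` {odo_act h y | h. True}"
      using orbit_equiv assms unfolding cont_orbit_equiv_def by blast
    then obtain a where "odo_act g (\<phi> y) = \<phi> (odo_act a y)"
      by blast
    then show "f (SOME a. odo_act g (\<phi> y) = \<phi> (odo_act a y)) y = g"
      using cocycle_unique[OF assms] by (metis (mono_tags, lifting) someI)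
  qed
qed

lemma cocycle_eventually_constant:
  fixes E :: "'h set"
  assumes "finite E" and generates: "\<And>S. subgroup_add S \<Longrightarrow> E \<subseteq> S \<Longrightarrow> S = UNIV"
  obtains N where "\<forall>h\<in>Hs N. \<forall>y\<in>Y. f h y = f h Hs"
proof -
  have "\<forall>e. \<exists>n. \<forall>y\<in>Y. \<forall>y'\<in>Y. y' n = y n \<longrightarrow> f e y' = f e y"
  proof
    fix e
    have "\<forall>y\<in>Y. \<exists>n. \<forall>y'\<in>Y. y' n = y n \<longrightarrow> f e y' = f e y"
      using cocycle_locally_constant by blast
    then obtain n where "\<forall>y\<in>Y. \<forall>y'\<in>Y. y' n = y n \<longrightarrow> f e y' = f e y"
      by (rule odometer_locally_constant_imp_uniformly[OF odometer_seq_Y])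
    then show "\<exists>n. \<forall>y\<in>Y. \<forall>y'\<in>Y. y' n = y n \<longrightarrow> f e y' = f e y" ..
  qed
  then obtain level where level: "\<forall>e. \<forall>y\<in>Y. \<forall>y'\<in>Y. y' (level e) = y (level e) \<longrightarrow> f e y' = f e y"
    by (rule choice[THEN exE])
  define N where "N = Max (insert 0 (level ` E))"
  have "E \<subseteq> {a. \<forall>y\<in>Y. \<forall>h\<in>Hs N. f a (odo_act h y) = f a y}"
  proof (intro subsetI CollectI ballI)
    fix e y h assume e: "e \<in> E" and y: "y \<in> Y" and h: "h \<in> Hs N"
    have "odo_act h y N = y N"
      by (rule odo_act_coord_eq[OF odometer_seq_Y y h])
    moreover have "level e \<le> N"
      using e \<open>finite E\<close> unfolding N_def by simp
    ultimately have "odo_act h y (level e) = y (level e)"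
      by (rule odometer_space_coord_eq[OF odometer_seq_Y y odo_act_in_odometer_space[OF y]])
    then show "f e (odo_act h y) = f e y"
      using level y odo_act_in_odometer_space[OF y] by blast
  qed
  then have invariant: "f a (odo_act h y) = f a y" if "y \<in> Y" "h \<in> Hs N" for a h y
    using generates[OF cocycle_invariant_subgroup] that by blast
  have "f h y = f h Hs" if "h \<in> Hs N" "y \<in> Y" for h y
  proof (rule odometer_invariant_locally_constant_imp_constant[OF odometer_seq_Y _ _ that(2)])
    show "\<forall>x\<in>Y. \<exists>n. \<forall>x'\<in>Y. x' n = x n \<longrightarrow> f h x' = f h x"
      using cocycle_locally_constant by blast
    show "\<forall>a. \<forall>x\<in>Y. f h (odo_act a x) = f h x"
      using cocycle_swap invariant that(1) by blast
  qed
  then show ?thesis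
    using that by blast
qed

end

theorem theorem3p4:
  fixes Gs Hs :: "nat \<Rightarrow> (int ^ 'd) set"
    and \<phi> :: "(nat \<Rightarrow> (int ^ 'd) set) \<Rightarrow> (nat \<Rightarrow> (int ^ 'd) set)"
    and f :: "int ^ 'd \<Rightarrow> (nat \<Rightarrow> (int ^ 'd) set) \<Rightarrow> int ^ 'd"
  assumes freeX: "free_odometer Gs"
    and freeY: "free_odometer Hs"
    and coe: "cont_orbit_equiv Hs Gs \<phi>"
    and cocycle: "\<forall>h. \<forall>y\<in>odometer_space Hs. odo_act (f h y) (\<phi> y) = \<phi> (odo_act h y)"
  shows "\<exists>G0 H0 (q::nat) C \<theta>.
     finite_index G0 \<and> finite_index H0 \<and> index G0 = index H0 \<and>
     (\<forall>i<q. clopenin (odometer_top Hs) (C i) \<and> C i \<noteq> {}) \<and>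
     (\<forall>i<q. \<forall>j<q. i \<noteq> j \<longrightarrow> C i \<inter> C j = {}) \<and>
     (\<Union>i<q. C i) = odometer_space Hs \<and>
     (\<forall>i<q. \<forall>h\<in>H0. \<forall>y\<in>C i. odo_act h y \<in> C i) \<and>
     (\<forall>i<q. bij_betw (\<theta> i) H0 G0 \<and> (\<forall>a\<in>H0. \<forall>b\<in>H0. \<theta> i (a + b) = \<theta> i a + \<theta> i b)) \<and>
     (\<forall>i<q. \<forall>h\<in>H0. \<forall>y\<in>C i. f h y = \<theta> i h)"
proof -
  interpret odometer_orbit_equivalence Gs Hs \<phi> f
    using assms by unfold_locales
  define \<theta> where "\<theta> h = f h Hs" for h
  obtain N where const: "\<forall>h\<in>Hs N. \<forall>y\<in>odometer_space Hs. f h y = \<theta> h"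
    unfolding \<theta>_def
  proof (rule cocycle_eventually_constant)
    show "finite (range (\<lambda>j::'d. axis j (1::int)))"
      by simp
    show "S = UNIV" if "subgroup_add S" "range (\<lambda>j. axis j 1) \<subseteq> S" for S :: "(int ^ 'd) set"
      using that(2) by (intro subgroup_add_axis_eq_UNIV[OF that(1)]) auto
  qed
  have base: "Hs \<in> odometer_space Hs"
    by (rule base_point_in_odometer_space[OF odometer_seq_Y])
  have H0: "finite_index (Hs N)"
    using odometer_seq_Y unfolding odometer_seq_def by blast
  have hom: "\<theta> (a + h) = \<theta> a + \<theta> h" if "h \<in> Hs N" for a h
  proof -
    have "f h (odo_act a Hs) = \<theta> h"
      using const that odo_act_in_odometer_space[OF base] by blast
    then show ?thesis
      using cocycle_add[OF base, of h a] unfolding \<theta>_def by (simp add: add.commute)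
  qed
  have bij: "bij \<theta>"
    unfolding \<theta>_def by (rule cocycle_orbit_bij[OF base])
  have "bij_betw \<theta> (Hs N) (\<theta> ` Hs N)"
    by (rule inj_on_imp_bij_betw[OF bij_is_inj[OF bij, THEN inj_on_subset]]) simp
  moreover have "clopenin (odometer_top Hs) (odometer_space Hs)"
    unfolding clopenin_def by (metis openin_topspace closedin_topspace topspace_odometer_top)
  ultimately show ?thesis
    using index_image[OF bij H0 hom] H0 const hom base
    by (intro exI[of _ "\<theta> ` Hs N"] exI[of _ "Hs N"] exI[of _ 1] exI[of _ "\<lambda>_. Y"]
        exI[of _ "\<lambda>_. \<theta>"])
      (auto simp: odo_act_in_odometer_space)
qed

end
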